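(* For every $f\in\mathrm{Sp}(1,\mathbb{R})=\mathrm{SL}(2,\mathbb{R})$, $s(f)=i^{-n(f)}$.
   Context: Let $V=\mathbb{R}^{2}$ with basis $p,q$ and symplectic form $\omega(p,q)=-\omega(q,p)=1$, $\omega(p,p)=\omega(q,q)=0$; $\mathrm{Sp}(1,\mathbb{R})$ is its isometry group; $\lambda_0=\mathrm{span}\{p\}$. A lagrangian is a subspace equal to its own $\omega$-orthogonal. Definition of $s$: for oriented lagrangians $\lambda_1,\lambda_2$ of a real symplectic space, let $\kappa=\lambda_1\cap\lambda_2$. If $\kappa=0$, $\epsilon(\lambda_1,\lambda_2)=\mathrm{sgn}\det(\omega(a_i,b_j))$ for positive bases $(a_i)$ of $\lambda_1$, $(b_j)$ of $\lambda_2$. If $\kappa\neq0$, orient $\kappa$ arbitrarily, orient $\lambda_i/\kappa$ so that a positive basis of $\kappa$ followed by lifts of a positive basis of $\lambda_i/\kappa$ is positive in $\lambda_i$, and set $\epsilon(\lambda_1,\lambda_2)=\epsilon(\lambda_1/\kappa,\lambda_2/\kappa)$ in $\kappa^\perp/\kappa$; if $\lambda_1=\lambda_2$, $\epsilon=1$ if orientations agree and $-1$ otherwise. Put $s(\lambda_1,\lambda_2)=i^{\dim\lambda_1-\dim\kappa}\epsilon(\lambda_1,\lambda_2)$, and $s(f)=s(\lambda_0,f(\lambda_0))$ with $\lambda_0$ arbitrarily oriented and $f(\lambda_0)$ given the image orientation. Definition of $n$: for $f\in\mathrm{Sp}(1,\mathbb{R})$, $\star_f$ is the nonsingular bilinear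 form on $(f-1)V$ with $a\star_f b=\omega(x,b)$ where $(f-1)x=a$; $\mathrm{sgn}[\det(\star_f)]\in\{\pm1\}$ is the sign of the determinant of its Gram matrix, with value $1$ when $f=\mathrm{Id}$; $\star_{f,\lambda_0}$ is its (symmetric) restriction to $\lambda_0\cap(f-1)V$. Then $n(f)=\mathrm{Signature}(\star_{f,\lambda_0})-\dim((f-1)V)-\mathrm{sgn}[\det(\star_f)]+1$. *)

theory Defs
  imports "HOL-Analysis.Analysis"
begin

definition pv :: "real^2" where "pv = axis 1 1"
definition qv :: "real^2" where "qv = axis 2 1"

definition omega :: "real^2 \<Rightarrow> real^2 \<Rightarrow> real" where
  "omega x y = x$1 * y$2 - x$2 * y$1"

definition Sp1 :: "(real^2^2) set" where
  "Sp1 = {f. \<forall>x y. omega (f *v x) (f *v y) = omega x y}"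

definition lambda0 :: "(real^2) set" where "lambda0 = span {pv}"

text \<open>In V = R^2 every lagrangian is a line; an oriented lagrangian is given by
  a nonzero vector a (its positive basis), the lagrangian being span {a}.
  eps_or a b is epsilon(span{a}, span{b}) with these orientations.\<close>

definition eps_or :: "real^2 \<Rightarrow> real^2 \<Rightarrow> real" where
  "eps_or a b =
     (if span {a} \<inter> span {b} = {0} then sgn (omega a b)
      else if (\<exists>c>0. b = c *s a) then 1 else -1)"

definition s_or :: "real^2 \<Rightarrow> real^2 \<Rightarrow> complex" where
  "s_or a b = \<i> ^ (dim (span {a}) - dim (span {a} \<inter> span {b})) * complex_of_real (eps_or a b)"

text \<open>s(f) with lambda0 oriented by the nonzero vector a \<in> lambda0,
  f(lambda0) carrying the image orientation f a.\<close>
definition s_sp :: "real^2^2 \<Rightarrow> real^2 \<Rightarrow> complex" where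
  "s_sp f a = s_or a (f *v a)"

definition imgV :: "real^2^2 \<Rightarrow> (real^2) set" where
  "imgV f = range (\<lambda>x. f *v x - x)"

definition star :: "real^2^2 \<Rightarrow> real^2 \<Rightarrow> real^2 \<Rightarrow> real" where
  "star f a b = omega (SOME x. f *v x - x = a) b"

definition gram_det :: "('a \<Rightarrow> 'a \<Rightarrow> real) \<Rightarrow> 'a list \<Rightarrow> real" where
  "gram_det B bs = (\<Sum>p | p permutes {..<length bs}.
       of_int (sign p) * (\<Prod>i<length bs. B (bs ! i) (bs ! (p i))))"

text \<open>Sign of the determinant of the Gram matrix of B on the subspace W,
  w.r.t. some basis of W (the sign is basis independent).\<close>
definition sgn_det_form :: "(real^2 \<Rightarrow> real^2 \<Rightarrow> real) \<Rightarrow> (real^2) set \<Rightarrow> real" where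
  "sgn_det_form B W = sgn (gram_det B (SOME bs. distinct bs \<and> independent (set bs)
                                          \<and> span (set bs) = W))"

definition signature :: "(real^2 \<Rightarrow> real^2 \<Rightarrow> real) \<Rightarrow> (real^2) set \<Rightarrow> int" where
  "signature B U =
     int (GREATEST k. \<exists>S. subspace S \<and> S \<subseteq> U \<and> dim S = k \<and> (\<forall>x\<in>S. x \<noteq> 0 \<longrightarrow> B x x > 0))
   - int (GREATEST k. \<exists>S. subspace S \<and> S \<subseteq> U \<and> dim S = k \<and> (\<forall>x\<in>S. x \<noteq> 0 \<longrightarrow> B x x < 0))"

definition n_index :: "real^2^2 \<Rightarrow> int" where
  "n_index f = signature (star f) (lambda0 \<inter> imgV f) - int (dim (imgV f))
                 - \<lfloor>sgn_det_form (star f) (imgV f)\<rfloor> + 1"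

end

theory Submission
  imports Defs
begin

(* Write f = [[alpha, beta], [gamma, delta]] with alpha delta - beta gamma = 1, so that
   det (f - 1) = 2 - tr f.  On the image of f - 1 the form star_f sends
   ((f - 1) x, (f - 1) y) to omega (x, (f - 1) y).  If f - 1 is invertible, star_f lives on the
   whole plane, the sign of its Gram determinant is that of det (f - 1), and its value at p is
   gamma / det (f - 1).  If f - 1 has rank one, its image is a line that is either transverse
   to lambda0 (gamma <> 0) or equal to lambda0, in which case the signature and determinant
   contributions cancel.  Altogether n(f) = -1 if gamma > 0; n(f) = -3 or 1 if gamma < 0,
   according as tr f < 2 or not; and n(f) = 0 or -2 if gamma = 0, according to the sign of
   alpha.  On the other side f p = alpha p + gamma q, so s(f) = i sgn gamma if gamma <> 0 and
   s(f) = sgn alpha otherwise, which matches i^(-n(f)) case by case. *)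

lemma matrix_vector_mult_2:
  fixes A :: "'a::comm_semiring_1^2^2"
  shows "(A *v x)$1 = A$1$1 * x$1 + A$1$2 * x$2" "(A *v x)$2 = A$2$1 * x$1 + A$2$2 * x$2"
  by (simp_all add: matrix_vector_mult_def sum_2)

lemma vec2_eq_iff: "(x::'a^2) = y \<longleftrightarrow> x$1 = y$1 \<and> x$2 = y$2"
  by (simp add: vec_eq_iff forall_2)

lemma pv_nth [simp]: "pv$1 = 1" "pv$2 = 0"
  and qv_nth [simp]: "qv$1 = 0" "qv$2 = 1"
  by (simp_all add: pv_def qv_def axis_def)

lemma lambda0_eq: "lambda0 = {x. x$2 = 0}"
proof -
  have "x \<in> range (\<lambda>k. k *\<^sub>R pv) \<longleftrightarrow> x$2 = 0" for x
    by (auto simp: vec2_eq_iff intro!: image_eqI[of _ _ "x$1"])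
  then show ?thesis by (auto simp: lambda0_def span_singleton)
qed

lemma omega_matrix_vector_mult: "omega (A *v x) (A *v y) = det A * omega x y"
  by (simp add: omega_def det_2 matrix_vector_mult_2 algebra_simps)

lemma omega_antisym: "omega y x = - omega x y"
  by (simp add: omega_def)

lemma omega_eq_0_imp_in_span:
  assumes "u \<noteq> 0" "omega u w = 0"
  shows "w \<in> span {u}"
proof -
  have "u$1 * w$2 = u$2 * w$1" using assms(2) by (simp add: omega_def)
  then have "w = (if u$1 = 0 then w$2 / u$2 else w$1 / u$1) *\<^sub>R u"
    using assms(1) by (auto simp: vec2_eq_iff field_simps)
  then show ?thesis by (metis span_base span_scale singletonI)
qed

lemma Sp1_iff_det: "f \<in> Sp1 \<longleftrightarrow> det f = 1"
proof
  assume "f \<in> Sp1"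
  then show "det f = 1"
    using omega_matrix_vector_mult[of f pv qv] by (simp add: Sp1_def omega_def)
qed (simp add: Sp1_def omega_matrix_vector_mult)

lemma matrix_minus_mat1_vector_mult: "(f - mat 1) *v x = f *v x - (x::'a::ring_1^'n)"
  by (simp add: matrix_vector_mult_diff_rdistrib)

lemma imgV_eq_range: "imgV f = range ((*v) (f - mat 1))"
  by (simp add: imgV_def matrix_minus_mat1_vector_mult)

lemma range_matrix_vector_mult_eq_UNIV:
  fixes A :: "'a::field^'n^'n"
  assumes "det A \<noteq> 0"
  shows "range ((*v) A) = UNIV"
  using assms matrix_right_invertible_surjective[of A]
  by (auto simp: invertible_det_nz[symmetric] invertible_def)

lemma range_matrix_vector_mult_eq_span:
  fixes A :: "real^2^2"
  assumes "det A = 0" and "A *v x \<noteq> 0"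
  shows "range ((*v) A) = span {A *v x}"
proof
  show "range ((*v) A) \<subseteq> span {A *v x}"
    using assms omega_matrix_vector_mult[of A x] omega_eq_0_imp_in_span by auto
  show "span {A *v x} \<subseteq> range ((*v) A)"
    by (auto simp: span_singleton matrix_vector_mult_scaleR[symmetric])
qed

(* Two preimages under f - 1 differ by a fixed vector z of f, and
   omega (z, f y - y) = omega (f z, f y) - omega (z, y) = 0. *)
lemma star_eq:
  assumes "f \<in> Sp1"
  shows "star f ((f - mat 1) *v x) ((f - mat 1) *v y) = omega x ((f - mat 1) *v y)"
  unfolding star_def
proof (rule someI2)
  show "f *v x - x = (f - mat 1) *v x"
    by (simp add: matrix_minus_mat1_vector_mult)
next
  fix x'
  assume "f *v x' - x' = (f - mat 1) *v x"
  then have fz: "f *v (x' - x) = x' - x"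
    by (simp add: matrix_minus_mat1_vector_mult matrix_vector_mult_diff_distrib algebra_simps)
  have "omega (x' - x) ((f - mat 1) *v y) = omega (x' - x) (f *v y) - omega (x' - x) y"
    by (simp add: matrix_minus_mat1_vector_mult omega_def algebra_simps)
  also have "\<dots> = omega (f *v (x' - x)) (f *v y) - omega (x' - x) y"
    by (simp only: fz)
  also have "\<dots> = 0"
    using assms by (simp add: Sp1_def)
  finally have "omega (x' - x) ((f - mat 1) *v y) = 0" .
  moreover have "omega (x' - x) b = omega x' b - omega x b" for b
    by (simp add: omega_def algebra_simps)
  ultimately show "omega x' ((f - mat 1) *v y) = omega x ((f - mat 1) *v y)"
    by simp
qed

lemma gram_det_Nil: "gram_det B [] = 1"
  by (simp add: gram_det_def)

lemma gram_det_single: "gram_det B [b] = B b b"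
  by (simp add: gram_det_def lessThan_Suc)

lemma gram_det_pair: "gram_det B [b1, b2] = B b1 b1 * B b2 b2 - B b1 b2 * B b2 b1"
proof -
  have "{..<length [b1, b2]} = insert 0 {1::nat}" by auto
  then show ?thesis
    by (simp add: gram_det_def sum_over_permutations_insert sign_swap_id lessThan_Suc
        transpose_def)
qed

lemma greatest_positive_subspace_dim_line:
  fixes B :: "real^2 \<Rightarrow> real^2 \<Rightarrow> real"
  assumes quadratic: "\<And>c. B (c *\<^sub>R v) (c *\<^sub>R v) = c^2 * B v v"
  shows "(GREATEST k. \<exists>S. subspace S \<and> S \<subseteq> span {v} \<and> dim S = k \<and>
                         (\<forall>x\<in>S. x \<noteq> 0 \<longrightarrow> B x x > 0))
         = (if B v v > 0 then 1 else 0)"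
proof (rule Greatest_equality)
  show "\<exists>S. subspace S \<and> S \<subseteq> span {v} \<and> dim S = (if B v v > 0 then 1 else 0) \<and>
            (\<forall>x\<in>S. x \<noteq> 0 \<longrightarrow> B x x > 0)"
  proof (cases "B v v > 0")
    case True
    then have "v \<noteq> 0"
      using quadratic[of 0] by auto
    moreover have "B x x > 0" if "x \<in> span {v}" "x \<noteq> 0" for x
      using that True quadratic by (auto simp: span_singleton)
    ultimately show ?thesis
      using True by (intro exI[of _ "span {v}"]) auto
  qed (auto simp: span_zero intro!: exI[of _ "{0}"])
next
  fix k
  assume "\<exists>S. subspace S \<and> S \<subseteq> span {v} \<and> dim S = k \<and> (\<forall>x\<in>S. x \<noteq> 0 \<longrightarrow> B x x > 0)"
  then obtain S where S: "S \<subseteq> span {v}" "dim S = k" "\<forall>x\<in>S. x \<noteq> 0 \<longrightarrow> B x x > 0"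
    by blast
  have "k \<le> 1"
    using S(2) dim_subset[OF S(1)] by (simp split: if_splits)
  moreover have "B v v > 0" if "k \<noteq> 0"
  proof -
    have "\<not> S \<subseteq> {0}"
      using that S(2) dim_subset[of S "{0}"] by auto
    then obtain x where "x \<in> S" "x \<noteq> 0" by blast
    moreover obtain c where "x = c *\<^sub>R v"
      using \<open>x \<in> S\<close> S(1) by (auto simp: span_singleton)
    ultimately show ?thesis
      using S(3) quadratic[of c] by (auto simp: zero_less_mult_iff)
  qed
  ultimately show "k \<le> (if B v v > 0 then 1 else 0)" by auto
qed

lemma signature_line:
  fixes B :: "real^2 \<Rightarrow> real^2 \<Rightarrow> real"
  assumes "\<And>c. B (c *\<^sub>R v) (c *\<^sub>R v) = c^2 * B v v"
  shows "signature B (span {v}) = \<lfloor>sgn (B v v)\<rfloor>"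
proof -
  have "\<And>c. - B (c *\<^sub>R v) (c *\<^sub>R v) = c^2 * - B v v"
    using assms by simp
  then show ?thesis
    using assms greatest_positive_subspace_dim_line[of B v]
      greatest_positive_subspace_dim_line[of "\<lambda>x y. - B x y" v]
    by (simp add: signature_def sgn_if floor_minus)
qed

lemma signature_zero:
  fixes B :: "real^2 \<Rightarrow> real^2 \<Rightarrow> real"
  assumes "B 0 0 = 0"
  shows "signature B {0} = 0"
  using signature_line[of B 0] assms by simp

lemma length_basis_eq_dim:
  assumes "distinct bs" "independent (set bs)" "span (set bs) = W"
  shows "length bs = dim W"
  using assms dim_span_eq_card_independent distinct_card by metis

lemma sgn_det_form_zero: "sgn_det_form B {0} = 1"
  unfolding sgn_det_form_def
proof (rule someI2[of _ "[]"])
  fix bs :: "(real^2) list"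
  assume "distinct bs \<and> independent (set bs) \<and> span (set bs) = {0}"
  then show "sgn (gram_det B bs) = 1"
    using length_basis_eq_dim[of bs "{0}"] by (simp add: gram_det_Nil)
qed (simp add: independent_empty)

lemma sgn_mult_power2: "t \<noteq> 0 \<Longrightarrow> sgn (y * t^2) = sgn (y::real)"
  by (metis mult.right_neutral sgn_mult sgn_pos zero_less_power2)

lemma sgn_det_form_line:
  fixes B :: "real^2 \<Rightarrow> real^2 \<Rightarrow> real"
  assumes "u \<noteq> 0" and quadratic: "\<And>c. B (c *\<^sub>R u) (c *\<^sub>R u) = c^2 * B u u"
  shows "sgn_det_form B (span {u}) = sgn (B u u)"
  unfolding sgn_det_form_def
proof (rule someI2[of _ "[u]"])
  show "distinct [u] \<and> independent (set [u]) \<and> span (set [u]) = span {u}"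
    using \<open>u \<noteq> 0\<close> by (simp add: independent_insert)
next
  fix bs :: "(real^2) list"
  assume bs: "distinct bs \<and> independent (set bs) \<and> span (set bs) = span {u}"
  then have "length bs = 1"
    using length_basis_eq_dim[of bs] \<open>u \<noteq> 0\<close> by simp
  then obtain b where b: "bs = [b]"
    by (metis One_nat_def length_0_conv length_Suc_conv)
  then have "b \<noteq> 0"
    using bs dependent_zero by force
  moreover obtain c where "b = c *\<^sub>R u"
    using bs b span_base[of b "{b}"] by (auto simp: span_singleton)
  ultimately show "sgn (gram_det B bs) = sgn (B u u)"
    using b quadratic[of c] sgn_mult_power2[of c "B u u"] by (simp add: gram_det_single mult.commute)
qed

(* The Gram determinant of the form (a, b) |-> omega (A^-1 a, b) in the basis A x, A y. *)
lemma gram_det_omega_matrix: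
  fixes A :: "real^2^2"
  shows "omega x (A *v x) * omega y (A *v y) - omega x (A *v y) * omega y (A *v x)
         = det A * (omega x y)^2"
  by (simp add: omega_def det_2 matrix_vector_mult_2 power2_eq_square algebra_simps)

lemma sgn_det_form_UNIV:
  fixes A :: "real^2^2"
  assumes "det A \<noteq> 0" and B: "\<And>x y. B (A *v x) (A *v y) = omega x (A *v y)"
  shows "sgn_det_form B UNIV = sgn (det A)"
  unfolding sgn_det_form_def
proof (rule someI2[of _ "[pv, qv]"])
  have "x = x$1 *\<^sub>R pv + x$2 *\<^sub>R qv" for x
    by (simp add: vec2_eq_iff)
  then have "span {pv, qv} = UNIV"
    by (metis UNIV_eq_I insertCI span_add span_base span_scale)
  moreover have "pv \<notin> span {qv}"
    by (auto simp: span_singleton vec2_eq_iff)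
  ultimately show "distinct [pv, qv] \<and> independent (set [pv, qv]) \<and> span (set [pv, qv]) = UNIV"
    by (auto simp: independent_insert vec2_eq_iff)
next
  fix bs :: "(real^2) list"
  assume bs: "distinct bs \<and> independent (set bs) \<and> span (set bs) = UNIV"
  then have "length bs = 2"
    using length_basis_eq_dim[of bs UNIV] by simp
  then obtain b1 b2 where b: "bs = [b1, b2]"
    by (auto simp: length_Suc_conv numeral_2_eq_2)
  then have "omega b2 b1 \<noteq> 0"
    using bs omega_eq_0_imp_in_span[of b2 b1] by (auto simp: independent_insert)
  moreover obtain x1 x2 where "b1 = A *v x1" "b2 = A *v x2"
    using range_matrix_vector_mult_eq_UNIV[OF \<open>det A \<noteq> 0\<close>] by (metis UNIV_I imageE)
  ultimately have "omega x1 x2 \<noteq> 0"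
    using omega_antisym[of x1 x2] by (auto simp: omega_matrix_vector_mult)
  moreover have "gram_det B bs = det A * (omega x1 x2)^2"
    using gram_det_omega_matrix[of x1 A x2] by (simp add: b B gram_det_pair \<open>b1 = _\<close> \<open>b2 = _\<close>)
  ultimately show "sgn (gram_det B bs) = sgn (det A)"
    by (simp add: sgn_mult_power2)
qed

lemma star_scaleR_quadratic:
  assumes "f \<in> Sp1" and "u \<in> imgV f"
  shows "star f (c *\<^sub>R u) (c *\<^sub>R u) = c^2 * star f u u"
proof -
  obtain x where u: "u = (f - mat 1) *v x"
    using assms(2) by (auto simp: imgV_eq_range)
  then have "c *\<^sub>R u = (f - mat 1) *v (c *\<^sub>R x)"
    by (simp add: matrix_vector_mult_scaleR)
  then have "star f (c *\<^sub>R u) (c *\<^sub>R u) = omega (c *\<^sub>R x) (c *\<^sub>R u)"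
    using star_eq[OF assms(1)] by metis
  also have "\<dots> = c^2 * omega x u"
    by (simp add: omega_def power2_eq_square algebra_simps)
  also have "omega x u = star f u u"
    using star_eq[OF assms(1)] u by metis
  finally show ?thesis .
qed

lemma n_index_invertible:
  assumes "f \<in> Sp1" and "det (f - mat 1) \<noteq> 0"
  shows "n_index f = \<lfloor>sgn (f$2$1 / det (f - mat 1))\<rfloor> - 1 - \<lfloor>sgn (det (f - mat 1))\<rfloor>"
proof -
  define A where "A = f - mat 1"
  have img: "imgV f = UNIV"
    using assms(2) by (simp add: imgV_eq_range range_matrix_vector_mult_eq_UNIV A_def)
  then obtain x where x: "A *v x = pv"
    by (metis UNIV_I imageE imgV_eq_range A_def)
  have "x$2 = - f$2$1 / det A"
  proof -
    have "A$1$1 * x$1 + A$1$2 * x$2 = 1" "A$2$1 * x$1 + A$2$2 * x$2 = 0"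
      using x by (simp_all add: vec2_eq_iff matrix_vector_mult_2)
    then have "det A * x$2 = - A$2$1"
      unfolding det_2 by algebra
    then show ?thesis
      using assms(2) by (simp add: A_def mat_def field_simps)
  qed
  moreover have "star f pv pv = omega x pv"
    using star_eq[OF assms(1), of x x] x by (simp add: A_def)
  ultimately have "star f pv pv = f$2$1 / det A"
    by (simp add: omega_def)
  moreover have "signature (star f) (lambda0 \<inter> imgV f) = \<lfloor>sgn (star f pv pv)\<rfloor>"
    unfolding img lambda0_def
    by (simp add: signature_line star_scaleR_quadratic[OF assms(1)] img)
  moreover have "sgn_det_form (star f) (imgV f) = sgn (det A)"
    unfolding img A_def by (rule sgn_det_form_UNIV) (use assms star_eq in auto)
  ultimately show ?thesis
    by (simp add: n_index_def img A_def)
qed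

lemma star_zero: "f \<in> Sp1 \<Longrightarrow> star f 0 0 = 0"
  using star_eq[of f 0 0] by (simp add: omega_def)

lemma n_index_rank_one:
  assumes "f \<in> Sp1" and "u \<in> imgV f" and "u \<noteq> 0" and "det (f - mat 1) = 0"
  shows "n_index f = signature (star f) (lambda0 \<inter> span {u}) - \<lfloor>sgn (star f u u)\<rfloor>"
proof -
  obtain x where "u = (f - mat 1) *v x"
    using assms(2) by (auto simp: imgV_eq_range)
  then have img: "imgV f = span {u}"
    using assms(3,4) range_matrix_vector_mult_eq_span by (simp add: imgV_eq_range)
  have "sgn_det_form (star f) (imgV f) = sgn (star f u u)"
    unfolding img using assms(1-3) by (simp add: sgn_det_form_line star_scaleR_quadratic)
  then show ?thesis
    using assms(3) by (simp add: n_index_def img)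
qed

lemma n_index_transversal:
  assumes "f \<in> Sp1" and "det (f - mat 1) = 0" and "f$2$1 \<noteq> 0"
  shows "n_index f = - \<lfloor>sgn (f$2$1)\<rfloor>"
proof -
  define u where "u = (f - mat 1) *v pv"
  have u: "u$2 = f$2$1"
    by (simp add: u_def matrix_vector_mult_2 mat_def)
  then have "u \<noteq> 0" and "u \<in> imgV f"
    using assms(3) by (auto simp: u_def imgV_eq_range)
  have "lambda0 \<inter> span {u} = {0}"
    using u assms(3) by (auto simp: lambda0_eq span_singleton)
  moreover have "star f u u = f$2$1"
    using star_eq[OF assms(1), of pv pv] u by (simp add: u_def omega_def)
  ultimately show ?thesis
    using n_index_rank_one[OF assms(1) \<open>u \<in> imgV f\<close> \<open>u \<noteq> 0\<close> assms(2)]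
    by (simp add: signature_zero star_zero[OF assms(1)])
qed

lemma n_index_imgV_subset_lambda0:
  assumes "f \<in> Sp1" and "imgV f \<subseteq> lambda0"
  shows "n_index f = 0"
proof (cases "imgV f = {0}")
  case True
  then have "lambda0 \<inter> imgV f = {0}"
    by (auto simp: lambda0_def span_zero)
  then show ?thesis
    using True by (simp add: n_index_def signature_zero star_zero[OF assms(1)] sgn_det_form_zero)
next
  case False
  have "0 \<in> imgV f"
    by (simp add: imgV_eq_range image_iff) (metis matrix_vector_mult_0_right)
  with False obtain u where u: "u \<in> imgV f" "u \<noteq> 0"
    by blast
  have "qv \<notin> lambda0"
    by (simp add: lambda0_eq)
  then have "det (f - mat 1) = 0"
    using assms(2) range_matrix_vector_mult_eq_UNIV[of "f - mat 1"] by (auto simp: imgV_eq_range)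
  moreover have "lambda0 \<inter> span {u} = span {u}"
    using u assms(2) span_minimal[of "{u}" lambda0] by (auto simp: lambda0_def)
  moreover have "signature (star f) (span {u}) = \<lfloor>sgn (star f u u)\<rfloor>"
    by (rule signature_line) (rule star_scaleR_quadratic[OF assms(1) u(1)])
  ultimately show ?thesis
    using n_index_rank_one[OF assms(1) u] by simp
qed

lemma n_index_Sp1:
  assumes "f \<in> Sp1"
  shows "n_index f = (if f$2$1 > 0 then -1
                      else if f$2$1 < 0 then (if det (f - mat 1) > 0 then -3 else 1)
                      else if f$1$1 > 0 then 0 else -2)"
proof -
  have det_f: "f$1$1 * f$2$2 - f$1$2 * f$2$1 = 1"
    using assms by (simp add: Sp1_iff_det det_2)
  have det_A: "det (f - mat 1) = (f$1$1 - 1) * (f$2$2 - 1) - f$1$2 * f$2$1"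
    by (simp add: det_2 mat_def)
  consider (invertible) "det (f - mat 1) \<noteq> 0"
    | (transversal) "det (f - mat 1) = 0" "f$2$1 \<noteq> 0"
    | (unipotent) "det (f - mat 1) = 0" "f$2$1 = 0"
    by blast
  then show ?thesis
  proof cases
    case invertible
    note n = n_index_invertible[OF assms invertible]
    show ?thesis
    proof (cases "f$2$1 = 0")
      case True
      have "f$1$1 * det (f - mat 1) = - ((f$1$1 - 1)^2)"
        using det_f det_A True by algebra
      moreover have "f$1$1 \<noteq> 1"
        using det_f det_A True invertible by auto
      ultimately have "f$1$1 * det (f - mat 1) < 0"
        by simp
      then have "f$1$1 > 0 \<longleftrightarrow> det (f - mat 1) < 0"
        by (auto simp: mult_less_0_iff)
      then show ?thesis
        using n True invertible by (cases "f$1$1 > 0") (simp_all add: floor_minus)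
    next
      case False
      then show ?thesis
        using n invertible
        by (cases "f$2$1 > 0"; cases "det (f - mat 1) > 0") (simp_all add: sgn_divide floor_minus)
    qed
  next
    case transversal
    then show ?thesis
      using n_index_transversal[OF assms] by (cases "f$2$1 > 0") (simp_all add: floor_minus)
  next
    case unipotent
    then have "f$1$1 = 1" "f$2$2 = 1"
      using det_f det_A by algebra+
    then have "imgV f \<subseteq> lambda0"
      using unipotent by (auto simp: imgV_eq_range lambda0_eq matrix_vector_mult_2 mat_def)
    then show ?thesis
      using n_index_imgV_subset_lambda0[OF assms] unipotent \<open>f$1$1 = 1\<close> by simp
  qed
qed

lemma s_or_transversal:
  assumes "a \<noteq> 0" and "omega a b \<noteq> 0"
  shows "s_or a b = \<i> * complex_of_real (sgn (omega a b))"
proof -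
  have "x = 0" if x: "x \<in> span {a}" "x \<in> span {b}" for x
  proof -
    obtain k m where xa: "x = k *\<^sub>R a" and xb: "x = m *\<^sub>R b"
      using x unfolding span_singleton by blast
    have "m * omega a b = omega a x"
      unfolding xb by (simp add: omega_def algebra_simps)
    moreover have "omega a x = 0"
      unfolding xa by (simp add: omega_def algebra_simps)
    ultimately show "x = 0"
      using assms(2) xb by simp
  qed
  then have "span {a} \<inter> span {b} = {0}"
    by (auto simp: span_zero)
  then show ?thesis
    using assms(1) by (simp add: s_or_def eps_or_def)
qed

lemma s_or_scaleR:
  assumes "a \<noteq> 0" and "c \<noteq> 0"
  shows "s_or a (c *\<^sub>R a) = (if c > 0 then 1 else -1)"
proof -
  have "c *\<^sub>R a \<in> span {a}" and "a \<in> span {c *\<^sub>R a}"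
    using assms(2) span_scale[of "c *\<^sub>R a" "{c *\<^sub>R a}" "inverse c"]
    by (simp_all add: span_base span_scale)
  then have "span {c *\<^sub>R a} = span {a}"
    by (simp add: span_eq)
  moreover have "span {a} \<noteq> {0}"
    using assms(1) span_base[of a "{a}"] by auto
  moreover have "(\<exists>c'>0. c *\<^sub>R a = c' *s a) \<longleftrightarrow> c > 0"
    using assms(1) by (auto simp: scalar_mult_eq_scaleR)
  ultimately show ?thesis
    by (simp add: s_or_def eps_or_def)
qed

lemma s_sp_Sp1:
  assumes "f \<in> Sp1" and "a \<in> lambda0" and "a \<noteq> 0"
  shows "s_sp f a = (if f$2$1 \<noteq> 0 then \<i> * complex_of_real (sgn (f$2$1))
                     else if f$1$1 > 0 then 1 else -1)"
proof -
  have a: "a$2 = 0" "a$1 \<noteq> 0"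
    using assms(2,3) by (auto simp: lambda0_eq vec2_eq_iff)
  show ?thesis
  proof (cases "f$2$1 = 0")
    case True
    then have "f *v a = f$1$1 *\<^sub>R a"
      using a by (simp add: vec2_eq_iff matrix_vector_mult_2)
    moreover have "f$1$1 \<noteq> 0"
      using assms(1) True by (auto simp: Sp1_iff_det det_2)
    ultimately show ?thesis
      using True assms(3) by (simp add: s_sp_def s_or_scaleR)
  next
    case False
    have "omega a (f *v a) = f$2$1 * (a$1)^2"
      using a by (simp add: omega_def matrix_vector_mult_2 power2_eq_square)
    then show ?thesis
      using False a assms(3) by (simp add: s_sp_def s_or_transversal sgn_mult_power2)
  qed
qed

theorem proposition3p3:
  fixes f :: "real^2^2" and a :: "real^2"
  assumes "f \<in> Sp1" and "a \<in> lambda0" and "a \<noteq> 0"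
  shows "s_sp f a = \<i> powi (- n_index f)"
proof -
  note s = s_sp_Sp1[OF assms] and n = n_index_Sp1[OF assms(1)]
  consider "f$2$1 > 0" | "f$2$1 < 0" "det (f - mat 1) > 0" | "f$2$1 < 0" "\<not> det (f - mat 1) > 0"
    | "f$2$1 = 0" "f$1$1 > 0" | "f$2$1 = 0" "\<not> f$1$1 > 0"
    by linarith
  then show ?thesis
    using s n by cases (simp_all add: power_int_minus power_numeral_reduce)
qed

end
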